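(* Let $\{\xi_i;i\ge1\}$ be i.i.d. standard normal random variables and $S_k=\sum_{i=1}^k\xi_i^2$. Then $$P\left(\left|\frac{S_n}{S_m}-\frac{n}{m}\right|\ge x\right)\le 6\exp\left(-\frac{m^4x^2}{48n^3}\right)$$ for all integers $m\ge1$, $n\ge1$ and real $x>0$ satisfying $m\le n/2$ and $x\le n/m$. *)

theory Defs
  imports "HOL-Probability.Probability"
begin

definition sq_partial_sum :: "(nat \<Rightarrow> 'a \<Rightarrow> real) \<Rightarrow> nat \<Rightarrow> 'a \<Rightarrow> real" where
  "sq_partial_sum \<xi> k \<omega> = (\<Sum>i\<in>{1..k}. (\<xi> i \<omega>)\<^sup>2)"

end

theory Submission
  imports Defs
begin

text \<open>For \<open>\<bar>l\<bar> \<le> 1/4\<close> the moment generating function of \<open>\<xi>\<^sup>2 - 1\<close> is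
  \<open>exp (- l) / sqrt (1 - 2 l) \<le> exp (2 l\<^sup>2)\<close>, so by independence \<open>S\<^sub>k - k\<close> has moment generating
  function at most \<open>exp (2 k l\<^sup>2)\<close>, and the Chernoff bound gives
  \<open>P (\<bar>S\<^sub>k - k\<bar> \<ge> t) \<le> 2 exp (- t\<^sup>2 / (8 k))\<close> for \<open>t \<le> k\<close>.
  If \<open>\<bar>S\<^sub>n - n\<bar> < x m / 4\<close> and \<open>\<bar>S\<^sub>m - m\<bar> < x m\<^sup>2 / (3 n)\<close>, then
  \<open>\<bar>S\<^sub>n / S\<^sub>m - n / m\<bar> < x\<close>; the two tail bounds at these thresholds are each at most
  \<open>2 exp (- m\<^sup>4 x\<^sup>2 / (48 n\<^sup>3))\<close>, which even yields the constant 4 instead of 6.\<close>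

lemma ln_one_minus_ge:
  fixes u :: real
  assumes "\<bar>u\<bar> \<le> 1/2"
  shows "- u - u\<^sup>2 \<le> ln (1 - u)"
proof (cases "u \<ge> 0")
  case True
  define f where "f = (\<lambda>w::real. ln (1 - w) + w + w\<^sup>2)"
  have "f 0 \<le> f u"
  proof (rule DERIV_nonneg_imp_nondecreasing[of 0 u f])
    fix w assume w: "0 \<le> w" "w \<le> u"
    with assms have "w < 1" by auto
    then have "(f has_real_derivative (2*w + 1 - 1/(1-w))) (at w)"
      unfolding f_def by (auto intro!: derivative_eq_intros simp: field_simps)
    moreover have "2*w + 1 - 1/(1-w) = w*(1-2*w)/(1-w)"
      using \<open>w < 1\<close> by (simp add: field_simps)
    moreover have "w*(1-2*w)/(1-w) \<ge> 0"
      using w assms by (intro divide_nonneg_pos mult_nonneg_nonneg) auto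
    ultimately show "\<exists>y. (f has_real_derivative y) (at w) \<and> 0 \<le> y" by auto
  qed (use True in auto)
  then show ?thesis by (simp add: f_def)
next
  case False
  then show ?thesis using ln_one_plus_pos_lower_bound[of "-u"] assms by simp
qed

lemma exp_div_sqrt_le_exp_sq:
  fixes l :: real
  assumes "\<bar>l\<bar> \<le> 1/4"
  shows "exp (- l) / sqrt (1 - 2*l) \<le> exp (2 * l\<^sup>2)"
proof -
  have pos: "1 - 2*l > 0" using assms by auto
  have "- (2*l) - (2*l)\<^sup>2 \<le> ln (1 - 2*l)"
    using ln_one_minus_ge[of "2*l"] assms by simp
  then have "- l - ln (1 - 2*l) / 2 \<le> 2 * l\<^sup>2"
    by (simp add: power2_eq_square)
  moreover have "exp (- l) / sqrt (1 - 2*l) = exp (- l - ln (1 - 2*l) / 2)"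
    using pos by (simp add: exp_diff exp_ln ln_sqrt[symmetric] del: ln_sqrt)
  ultimately show ?thesis by simp
qed

text \<open>Completing the square: tilting the standard normal density by \<open>exp (l x\<^sup>2)\<close> gives a
  centred normal density of variance \<open>1 / (1 - 2 l)\<close>.\<close>
lemma std_normal_density_mult_exp_sq:
  fixes l x :: real
  assumes "l < 1/2"
  shows "std_normal_density x * exp (l * (x\<^sup>2 - 1)) =
    exp (- l) / sqrt (1 - 2*l) * normal_density 0 (1 / sqrt (1 - 2*l)) x"
proof -
  define c where "c = 1 - 2*l"
  have c: "c > 0" using assms by (simp add: c_def)
  have "normal_density 0 (1 / sqrt c) x = sqrt c / sqrt (2*pi) * exp (- (x\<^sup>2 * c) / 2)"
    using c by (simp add: normal_density_def power_divide real_sqrt_divide field_simps)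
  moreover have "exp (- l) * exp (- (x\<^sup>2 * c) / 2) = exp (- x\<^sup>2 / 2) * exp (l * (x\<^sup>2 - 1))"
    unfolding c_def mult_exp_exp by (simp add: field_simps)
  ultimately show ?thesis
    unfolding std_normal_density_def c_def[symmetric] using c by (simp add: field_simps)
qed

lemma nn_integral_exp_sq_std_normal:
  assumes X: "distributed M lborel X std_normal_density" and "l < 1/2"
  shows "(\<integral>\<^sup>+\<omega>. ennreal (exp (l * ((X \<omega>)\<^sup>2 - 1))) \<partial>M) = ennreal (exp (- l) / sqrt (1 - 2*l))"
proof -
  define C where "C = exp (- l) / sqrt (1 - 2*l)"
  have "C \<ge> 0" using assms by (simp add: C_def)
  have "(\<integral>\<^sup>+\<omega>. ennreal (exp (l * ((X \<omega>)\<^sup>2 - 1))) \<partial>M)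
      = (\<integral>\<^sup>+x. ennreal (std_normal_density x) * ennreal (exp (l * (x\<^sup>2 - 1))) \<partial>lborel)"
    by (rule distributed_nn_integral[OF X, symmetric]) simp
  also have "\<dots> = (\<integral>\<^sup>+x. ennreal C * ennreal (normal_density 0 (1 / sqrt (1 - 2*l)) x) \<partial>lborel)"
    using \<open>C \<ge> 0\<close> \<open>l < 1/2\<close>
    by (intro nn_integral_cong)
       (simp add: ennreal_mult[symmetric] std_normal_density_mult_exp_sq C_def)
  also have "\<dots> = ennreal C * (\<integral>\<^sup>+x. ennreal (normal_density 0 (1 / sqrt (1 - 2*l)) x) \<partial>lborel)"
    by (rule nn_integral_cmult) simp
  also have "(\<integral>\<^sup>+x. ennreal (normal_density 0 (1 / sqrt (1 - 2*l)) x) \<partial>lborel) = 1"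
    using \<open>l < 1/2\<close>
    by (subst nn_integral_eq_integral) (auto intro!: integrable_normal_density integral_normal_density)
  finally show ?thesis by (simp add: C_def)
qed

lemma borel_measurable_sq_partial_sum:
  assumes "\<And>i. i \<in> {1..k} \<Longrightarrow> \<xi> i \<in> borel_measurable M"
  shows "sq_partial_sum \<xi> k \<in> borel_measurable M"
  unfolding sq_partial_sum_def[abs_def] using assms by measurable

lemma (in prob_space) nn_integral_exp_sq_partial_sum_le:
  assumes indep: "indep_vars (\<lambda>_. borel) \<xi> {1..k}"
    and normal: "\<And>i. i \<in> {1..k} \<Longrightarrow> distributed M lborel (\<xi> i) std_normal_density"
    and l: "\<bar>l\<bar> \<le> 1/4"
  shows "(\<integral>\<^sup>+\<omega>. ennreal (exp (l * (sq_partial_sum \<xi> k \<omega> - real k))) \<partial>M)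
    \<le> ennreal (exp (2 * real k * l\<^sup>2))"
proof -
  have "l * (sq_partial_sum \<xi> k \<omega> - real k) = (\<Sum>i\<in>{1..k}. l * ((\<xi> i \<omega>)\<^sup>2 - 1))" for \<omega>
    by (simp add: sq_partial_sum_def sum_subtractf sum_distrib_left[symmetric])
  then have "exp (l * (sq_partial_sum \<xi> k \<omega> - real k)) = (\<Prod>i\<in>{1..k}. exp (l * ((\<xi> i \<omega>)\<^sup>2 - 1)))"
    for \<omega>
    by (simp add: exp_sum)
  then have "(\<integral>\<^sup>+\<omega>. ennreal (exp (l * (sq_partial_sum \<xi> k \<omega> - real k))) \<partial>M)
     = (\<integral>\<^sup>+\<omega>. (\<Prod>i\<in>{1..k}. ennreal (exp (l * ((\<xi> i \<omega>)\<^sup>2 - 1)))) \<partial>M)"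
    by (simp add: prod_ennreal)
  also have "\<dots> = (\<Prod>i\<in>{1..k}. \<integral>\<^sup>+\<omega>. ennreal (exp (l * ((\<xi> i \<omega>)\<^sup>2 - 1))) \<partial>M)"
    by (intro indep_vars_nn_integral indep_vars_compose2[OF indep]) auto
  also have "\<dots> = (\<Prod>i\<in>{1..k}. ennreal (exp (- l) / sqrt (1 - 2*l)))"
    using l by (intro prod.cong nn_integral_exp_sq_std_normal normal) auto
  also have "\<dots> \<le> (\<Prod>i\<in>{1..k}. ennreal (exp (2 * l\<^sup>2)))"
    using l by (intro prod_mono_ennreal ennreal_leI exp_div_sqrt_le_exp_sq)
  also have "\<dots> = ennreal (exp (2 * real k * l\<^sup>2))"
    by (simp add: ennreal_power exp_of_nat_mult[symmetric] mult_ac)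
  finally show ?thesis .
qed

lemma (in prob_space) prob_ge_le_of_mgf_le:
  fixes Y :: "'a \<Rightarrow> real"
  assumes [measurable]: "Y \<in> borel_measurable M"
    and mgf: "\<And>l. 0 < l \<Longrightarrow> l \<le> b \<Longrightarrow> (\<integral>\<^sup>+\<omega>. ennreal (exp (l * Y \<omega>)) \<partial>M) \<le> exp (c * l\<^sup>2)"
    and "c > 0" "0 < t" "t \<le> 2 * b * c"
  shows "prob {\<omega> \<in> space M. Y \<omega> \<ge> t} \<le> exp (- t\<^sup>2 / (4 * c))"
proof -
  define l where "l = t / (2 * c)"
  have l: "0 < l" "l \<le> b"
    using assms(3-5) by (auto simp: l_def field_simps)
  have "emeasure M {\<omega> \<in> space M. Y \<omega> \<ge> t}
      \<le> ennreal (exp (- l * t)) * (\<integral>\<^sup>+\<omega>. ennreal (exp (l * Y \<omega>)) * indicator (space M) \<omega> \<partial>M)"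
    by (intro Chernoff_ineq_nn_integral_ge l) auto
  also have "(\<integral>\<^sup>+\<omega>. ennreal (exp (l * Y \<omega>)) * indicator (space M) \<omega> \<partial>M)
      = (\<integral>\<^sup>+\<omega>. ennreal (exp (l * Y \<omega>)) \<partial>M)"
    by (intro nn_integral_cong) simp
  also have "ennreal (exp (- l * t)) * \<dots> \<le> ennreal (exp (- l * t)) * exp (c * l\<^sup>2)"
    by (intro mult_left_mono mgf l) auto
  also have "\<dots> = ennreal (exp (- t\<^sup>2 / (4 * c)))"
    using \<open>c > 0\<close>
    by (simp add: ennreal_mult[symmetric] mult_exp_exp l_def field_simps power2_eq_square)
  finally show ?thesis by (simp add: emeasure_eq_measure)
qed

lemma (in prob_space) prob_abs_ge_le_of_mgf_le:
  fixes Y :: "'a \<Rightarrow> real"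
  assumes [measurable]: "Y \<in> borel_measurable M"
    and mgf: "\<And>l. \<bar>l\<bar> \<le> b \<Longrightarrow> (\<integral>\<^sup>+\<omega>. ennreal (exp (l * Y \<omega>)) \<partial>M) \<le> exp (c * l\<^sup>2)"
    and "c > 0" "0 < t" "t \<le> 2 * b * c"
  shows "prob {\<omega> \<in> space M. \<bar>Y \<omega>\<bar> \<ge> t} \<le> 2 * exp (- t\<^sup>2 / (4 * c))"
proof -
  have "prob {\<omega> \<in> space M. \<bar>Y \<omega>\<bar> \<ge> t}
      \<le> prob ({\<omega> \<in> space M. Y \<omega> \<ge> t} \<union> {\<omega> \<in> space M. - Y \<omega> \<ge> t})"
    by (intro finite_measure_mono) auto
  also have "\<dots> \<le> prob {\<omega> \<in> space M. Y \<omega> \<ge> t} + prob {\<omega> \<in> space M. - Y \<omega> \<ge> t}"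
    by (intro measure_Un_le) auto
  also have "\<dots> \<le> exp (- t\<^sup>2 / (4 * c)) + exp (- t\<^sup>2 / (4 * c))"
    using mgf[of "- l" for l] assms(3-)
    by (intro add_mono prob_ge_le_of_mgf_le[where b = b]) (auto intro: mgf)
  finally show ?thesis by simp
qed

lemma (in prob_space) prob_sq_partial_sum_deviation_le:
  assumes indep: "indep_vars (\<lambda>_. borel) \<xi> {1..k}"
    and normal: "\<And>i. i \<in> {1..k} \<Longrightarrow> distributed M lborel (\<xi> i) std_normal_density"
    and "0 < t" "t \<le> real k"
  shows "prob {\<omega> \<in> space M. \<bar>sq_partial_sum \<xi> k \<omega> - real k\<bar> \<ge> t} \<le> 2 * exp (- t\<^sup>2 / (8 * real k))"
proof -
  have [measurable]: "sq_partial_sum \<xi> k \<in> borel_measurable M"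
    using distributed_measurable[OF normal] by (intro borel_measurable_sq_partial_sum) auto
  have "k > 0" using assms(3,4) by auto
  have "prob {\<omega> \<in> space M. \<bar>sq_partial_sum \<xi> k \<omega> - real k\<bar> \<ge> t} \<le> 2 * exp (- t\<^sup>2 / (4 * (2 * real k)))"
    using assms(3,4) \<open>k > 0\<close>
    by (intro prob_abs_ge_le_of_mgf_le[where b = "1/4"] nn_integral_exp_sq_partial_sum_le[OF indep normal])
       (auto simp: mult_ac)
  then show ?thesis by (simp add: mult_ac)
qed

lemma abs_divide_diff_lt:
  fixes a b p q x :: real
  assumes "0 < q" "0 < p" "x * q \<le> p"
    and a: "\<bar>a - p\<bar> < x * q / 4" and b: "\<bar>b - q\<bar> < x * q\<^sup>2 / (3 * p)"
  shows "\<bar>a / b - p / q\<bar> < x"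
proof -
  have "x * q\<^sup>2 / (3 * p) \<le> q / 3"
    using assms(1-3) by (simp add: field_simps power2_eq_square)
  with b have b_ge: "b \<ge> 2 * q / 3" by linarith
  with \<open>0 < q\<close> have "b > 0" by linarith
  from a have "0 < x * q" by linarith
  with \<open>0 < q\<close> have "x > 0" by (simp add: zero_less_mult_iff)
  have "\<bar>q * (a - p) - p * (b - q)\<bar> \<le> q * \<bar>a - p\<bar> + p * \<bar>b - q\<bar>"
    using assms(1,2) by (simp add: abs_mult abs_triangle_ineq4[THEN order_trans])
  also have "\<dots> < q * (x * q / 4) + p * (x * q\<^sup>2 / (3 * p))"
    using assms(1,2) a b by (intro add_strict_mono mult_strict_left_mono) auto
  also have "\<dots> = 7 / 12 * x * q\<^sup>2"
    using assms(2) by (simp add: field_simps power2_eq_square)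
  finally have num: "\<bar>q * (a - p) - p * (b - q)\<bar> < 7 / 12 * x * q\<^sup>2" .
  have "\<bar>a / b - p / q\<bar> = \<bar>q * (a - p) - p * (b - q)\<bar> / (q * b)"
    using \<open>b > 0\<close> assms(1) by (simp add: abs_divide field_simps)
  also have "\<dots> \<le> (7 / 12 * x * q\<^sup>2) / (2 / 3 * q\<^sup>2)"
    using num b_ge assms(1) \<open>x > 0\<close> by (intro frac_le) (auto simp: power2_eq_square)
  also have "\<dots> < x"
    using \<open>x > 0\<close> assms(1) by (simp add: field_simps power2_eq_square)
  finally show ?thesis .
qed

lemma ratio_tail_exponents_le:
  fixes p q x :: real
  assumes "0 < q" "2 * q \<le> p"
  shows "q ^ 4 * x\<^sup>2 / (48 * p ^ 3) \<le> (x * q / 4)\<^sup>2 / (8 * p)"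
    and "q ^ 4 * x\<^sup>2 / (48 * p ^ 3) \<le> (x * q\<^sup>2 / (3 * p))\<^sup>2 / (8 * q)"
proof -
  have "p > 0" using assms by simp
  have "q\<^sup>2 \<le> p\<^sup>2 / 4"
    using power_mono[of "2 * q" p 2] assms by (simp add: power_mult_distrib)
  have "q ^ 4 * x\<^sup>2 / (48 * p ^ 3) = q\<^sup>2 * (q\<^sup>2 * x\<^sup>2 / (48 * p ^ 3))"
    by (simp add: eval_nat_numeral)
  also have "\<dots> \<le> (p\<^sup>2 / 4) * (q\<^sup>2 * x\<^sup>2 / (48 * p ^ 3))"
    using \<open>q\<^sup>2 \<le> p\<^sup>2 / 4\<close> \<open>p > 0\<close> by (intro mult_right_mono) auto
  also have "\<dots> \<le> (x * q / 4)\<^sup>2 / (8 * p)"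
    using \<open>p > 0\<close> \<open>q > 0\<close> by (simp add: field_simps eval_nat_numeral zero_le_mult_iff)
  finally show "q ^ 4 * x\<^sup>2 / (48 * p ^ 3) \<le> (x * q / 4)\<^sup>2 / (8 * p)" .
  have "q ^ 4 * x\<^sup>2 / (48 * p ^ 3) = q * (q ^ 3 * x\<^sup>2 / (48 * p ^ 3))"
    by (simp add: eval_nat_numeral)
  also have "\<dots> \<le> (p / 2) * (q ^ 3 * x\<^sup>2 / (48 * p ^ 3))"
    using assms \<open>p > 0\<close> by (intro mult_right_mono) auto
  also have "\<dots> \<le> (x * q\<^sup>2 / (3 * p))\<^sup>2 / (8 * q)"
    using \<open>p > 0\<close> \<open>q > 0\<close> by (simp add: field_simps eval_nat_numeral)
  finally show "q ^ 4 * x\<^sup>2 / (48 * p ^ 3) \<le> (x * q\<^sup>2 / (3 * p))\<^sup>2 / (8 * q)" .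
qed

theorem lemma4p2:
  fixes M :: "'a measure" and \<xi> :: "nat \<Rightarrow> 'a \<Rightarrow> real"
    and m n :: nat and x :: real
  assumes "prob_space M"
    and "prob_space.indep_vars M (\<lambda>_. borel) \<xi> {1..}"
    and "\<And>i. i \<ge> 1 \<Longrightarrow> distributed M lborel (\<xi> i) std_normal_density"
    and "m \<ge> 1" and "n \<ge> 1" and "x > 0"
    and "real m \<le> real n / 2" and "x \<le> real n / real m"
  shows "measure M {\<omega> \<in> space M.
           \<bar>sq_partial_sum \<xi> n \<omega> / sq_partial_sum \<xi> m \<omega> - real n / real m\<bar> \<ge> x}
         \<le> 6 * exp (- ((real m)^4 * x\<^sup>2 / (48 * (real n)^3)))"
proof -
  interpret prob_space M by fact
  define K where "K = (real m)^4 * x\<^sup>2 / (48 * (real n)^3)"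
  define t where "t = x * real m / 4"
  define s where "s = x * (real m)\<^sup>2 / (3 * real n)"
  have indep: "indep_vars (\<lambda>_. borel) \<xi> {1..k}" for k
    using assms(2) by (rule indep_vars_subset) auto
  have normal: "distributed M lborel (\<xi> i) std_normal_density" if "i \<in> {1..k}" for i k
    using assms(3) that by simp
  have [measurable]: "sq_partial_sum \<xi> k \<in> borel_measurable M" for k
    using distributed_measurable[OF normal] by (intro borel_measurable_sq_partial_sum) auto
  have "x * m \<le> n" using assms(4,8) by (simp add: field_simps)
  then have "t \<le> n" "s \<le> m"
    using assms(4-7) by (auto simp: t_def s_def field_simps power2_eq_square)
  have "{\<omega> \<in> space M. \<bar>sq_partial_sum \<xi> n \<omega> / sq_partial_sum \<xi> m \<omega> - n / m\<bar> \<ge> x}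
     \<subseteq> {\<omega> \<in> space M. \<bar>sq_partial_sum \<xi> n \<omega> - n\<bar> \<ge> t} \<union> {\<omega> \<in> space M. \<bar>sq_partial_sum \<xi> m \<omega> - m\<bar> \<ge> s}"
    using abs_divide_diff_lt[of m n x] \<open>x * m \<le> n\<close> assms(4,5)
    by (fastforce simp: t_def s_def not_le[symmetric])
  then have "prob {\<omega> \<in> space M. \<bar>sq_partial_sum \<xi> n \<omega> / sq_partial_sum \<xi> m \<omega> - n / m\<bar> \<ge> x}
     \<le> prob {\<omega> \<in> space M. \<bar>sq_partial_sum \<xi> n \<omega> - n\<bar> \<ge> t} + prob {\<omega> \<in> space M. \<bar>sq_partial_sum \<xi> m \<omega> - m\<bar> \<ge> s}"
    by (intro order_trans[OF finite_measure_mono measure_Un_le]) auto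
  also have "\<dots> \<le> 2 * exp (- t\<^sup>2 / (8 * real n)) + 2 * exp (- s\<^sup>2 / (8 * real m))"
    using \<open>t \<le> n\<close> \<open>s \<le> m\<close> assms(4-6)
    by (intro add_mono prob_sq_partial_sum_deviation_le indep normal) (auto simp: t_def s_def)
  also have "\<dots> \<le> 2 * exp (- K) + 2 * exp (- K)"
    using ratio_tail_exponents_le[of m n x] assms(4,7)
    unfolding K_def t_def s_def by (intro add_mono) auto
  also have "\<dots> \<le> 6 * exp (- K)" by simp
  finally show ?thesis by (simp add: K_def)
qed

end
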